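(* Let $k$ be a field and $B$ a standard graded $k$-algebra of dimension $d$ with homogeneous maximal ideal $\mathfrak{m}$. Let $s\ge0$ be an integer and let $A$ be the $k$-subalgebra of $B$ generated by $d+s$ linear forms $x_1,\ldots,x_{d+s}$ of $B$. Then \[\mathfrak{m}^n=(x_1,\ldots,x_{d-1})\mathfrak{m}^{n-1}+(x_d,\ldots,x_{d+s})^n\quad\text{for all } n\gg0\] if and only if $B/A$ is a finite module over $k[x_1,\ldots,x_{d-1}]$.
   Context: A standard graded $k$-algebra is a graded $k$-algebra $B=\bigoplus_{i\ge0}B_i$ with $B_0=k$, generated as a $k$-algebra by finitely many elements of $B_1$ (linear forms). The ideals in the displayed equation are ideals of $B$. *)

theory Defs
  imports "HOL-Algebra.Ideal_Product" "HOL-Algebra.Generated_Rings" "HOL-Algebra.Subrings"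
begin

definition standard_graded :: "('a, 'b) ring_scheme \<Rightarrow> (nat \<Rightarrow> 'a set) \<Rightarrow> bool" where
  "standard_graded R Bg \<longleftrightarrow>
     cring R \<and>
     (\<forall>i. additive_subgroup (Bg i) R) \<and>
     (\<forall>i j. \<forall>a\<in>Bg i. \<forall>b\<in>Bg j. a \<otimes>\<^bsub>R\<^esub> b \<in> Bg (i + j)) \<and>
     (\<forall>x\<in>carrier R. \<exists>!c::nat \<Rightarrow> 'a. (\<forall>i. c i \<in> Bg i) \<and>
          (\<exists>N. (\<forall>i>N. c i = \<zero>\<^bsub>R\<^esub>) \<and> x = finsum R c {..N})) \<and>
     subfield (Bg 0) R \<and>
     (\<exists>G. finite G \<and> G \<subseteq> Bg 1 \<and> carrier R = generate_ring R (Bg 0 \<union> G))"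

definition hom_max_ideal :: "('a, 'b) ring_scheme \<Rightarrow> (nat \<Rightarrow> 'a set) \<Rightarrow> 'a set" where
  "hom_max_ideal R Bg = Idl\<^bsub>R\<^esub> (\<Union>i\<in>{1..}. Bg i)"

definition ideal_power :: "('a, 'b) ring_scheme \<Rightarrow> 'a set \<Rightarrow> nat \<Rightarrow> 'a set" where
  "ideal_power R I n = ((\<lambda>J. ideal_prod R I J) ^^ n) (carrier R)"

definition has_prime_chain :: "('a, 'b) ring_scheme \<Rightarrow> nat \<Rightarrow> bool" where
  "has_prime_chain R n \<longleftrightarrow>
     (\<exists>P :: nat \<Rightarrow> 'a set. (\<forall>i\<le>n. primeideal (P i) R) \<and> (\<forall>i<n. P i \<subset> P (Suc i)))"

definition krull_dim_eq :: "('a, 'b) ring_scheme \<Rightarrow> nat \<Rightarrow> bool" where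
  "krull_dim_eq R d \<longleftrightarrow> has_prime_chain R d \<and> \<not> has_prime_chain R (Suc d)"

text \<open>For subrings S \<subseteq> A \<subseteq> R: R/A is a finitely generated S-module, i.e. there is a
  finite F such that every element of R is a + sum_(f in F) r_f f with a in A, r_f in S.\<close>
definition finite_quotient_module ::
  "('a, 'b) ring_scheme \<Rightarrow> 'a set \<Rightarrow> 'a set \<Rightarrow> bool" where
  "finite_quotient_module R S A \<longleftrightarrow>
     (\<exists>F. finite F \<and> F \<subseteq> carrier R \<and>
        (\<forall>b\<in>carrier R. \<exists>a\<in>A. \<exists>r. r ` F \<subseteq> S \<and>
            b = a \<oplus>\<^bsub>R\<^esub> finsum R (\<lambda>f. r f \<otimes>\<^bsub>R\<^esub> f) F))"

end

theory Submission
  imports Defs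
begin

text \<open>Write \<open>I = (x\<^sub>1, \<dots>, x\<^sub>d\<^sub>-\<^sub>1)\<close>, \<open>J = (x\<^sub>d, \<dots>, x\<^sub>d\<^sub>+\<^sub>s)\<close>, \<open>S = k[x\<^sub>1, \<dots>, x\<^sub>d\<^sub>-\<^sub>1]\<close> and
  \<open>A = k[x\<^sub>1, \<dots>, x\<^sub>d\<^sub>+\<^sub>s]\<close>; both sides of the equivalence can be checked degree by degree.
  If \<open>B = A + S f\<^sub>1 + \<dots> + S f\<^sub>r\<close> with all \<open>f\<^sub>i\<close> of degree at most \<open>N\<close>, let \<open>n > N\<close> and let \<open>y\<close> be
  homogeneous of degree at least \<open>n\<close>. The part of \<open>y\<close> coming from \<open>A\<close> is a form in the \<open>x\<^sub>i\<close>,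
  hence lies in \<open>I \<mm>\<^sup>n\<^sup>-\<^sup>1 + J\<^sup>n\<close>; each part coming from \<open>S f\<^sub>i\<close> is a form of positive degree in
  \<open>x\<^sub>1, \<dots>, x\<^sub>d\<^sub>-\<^sub>1\<close> times a form, hence lies in \<open>I \<mm>\<^sup>n\<^sup>-\<^sup>1\<close>.
  Conversely, if \<open>\<mm>\<^sup>n = I \<mm>\<^sup>n\<^sup>-\<^sup>1 + J\<^sup>n\<close> for all \<open>n > N\<close>, the monomials of degree at most \<open>N\<close>
  in a set of linear generators of \<open>B\<close> generate \<open>B\<close> over \<open>S\<close> modulo \<open>A\<close>: by induction on the
  degree, a form of degree \<open>n > N\<close> is the degree-\<open>n\<close> part of an element of \<open>J\<^sup>n\<close>, which lies in
  \<open>A\<close>, plus that of an element of \<open>I \<mm>\<^sup>n\<^sup>-\<^sup>1\<close>, an \<open>S\<close>-combination of forms of degree \<open>n - 1\<close>.\<close>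

context ring
begin

lemma ideal_zero_closed: "ideal I R \<Longrightarrow> \<zero> \<in> I"
  by (simp add: additive_subgroup.zero_closed ideal.axioms(1))

lemma ideal_add_closed: "ideal I R \<Longrightarrow> a \<in> I \<Longrightarrow> b \<in> I \<Longrightarrow> a \<oplus> b \<in> I"
  by (simp add: additive_subgroup.a_closed ideal.axioms(1))

lemma finsum_closed_in:
  assumes "finite A" "Z \<subseteq> carrier R" "\<zero> \<in> Z" "\<And>u v. u \<in> Z \<Longrightarrow> v \<in> Z \<Longrightarrow> u \<oplus> v \<in> Z"
    and "\<And>a. a \<in> A \<Longrightarrow> f a \<in> Z"
  shows "finsum R f A \<in> Z"
  using assms(1,5)
proof (induction A rule: finite_induct)
  case empty
  then show ?case using assms by simp
next
  case (insert a A)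
  then have "f \<in> A \<rightarrow> carrier R" "f a \<in> carrier R" using assms(2) by auto
  then show ?case using insert assms by simp
qed

lemma ideal_prod_mono:
  assumes "I \<subseteq> I'" "J \<subseteq> J'"
  shows "I \<cdot> J \<subseteq> I' \<cdot> J'"
proof
  fix z assume "z \<in> I \<cdot> J"
  then show "z \<in> I' \<cdot> J'"
    by (induction rule: ideal_prod.induct) (use assms in \<open>auto intro: ideal_prod.intros\<close>)
qed

lemma ideal_power_0 [simp]: "ideal_power R I 0 = carrier R"
  by (simp add: ideal_power_def)

lemma ideal_power_Suc: "ideal_power R I (Suc n) = I \<cdot> ideal_power R I n"
  by (simp add: ideal_power_def)

lemma ideal_power_is_ideal: "ideal I R \<Longrightarrow> ideal (ideal_power R I n) R"
  by (induction n) (auto simp: ideal_power_Suc oneideal ideal_prod_is_ideal)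

lemma ideal_power_antimono:
  assumes I: "ideal I R" and "n \<le> n'"
  shows "ideal_power R I n' \<subseteq> ideal_power R I n"
  using \<open>n \<le> n'\<close>
proof (induction n' rule: dec_induct)
  case (step n')
  have "ideal_power R I (Suc n') \<subseteq> ideal_power R I n'"
    using ideal_prod_inter[OF I ideal_power_is_ideal[OF I]] by (auto simp: ideal_power_Suc)
  then show ?case using step.IH by blast
qed simp

lemma ideal_power_mono: "I \<subseteq> I' \<Longrightarrow> ideal_power R I n \<subseteq> ideal_power R I' n"
  by (induction n) (auto simp: ideal_power_Suc intro: ideal_prod_mono[THEN subsetD])

lemma set_add_memI: "a \<in> A \<Longrightarrow> b \<in> B \<Longrightarrow> a \<oplus> b \<in> A <+>\<^bsub>R\<^esub> B"
  unfolding set_add_def' by blast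

lemma set_add_memE:
  assumes "y \<in> A <+>\<^bsub>R\<^esub> B"
  obtains a b where "a \<in> A" "b \<in> B" "y = a \<oplus> b"
  using assms unfolding set_add_def' by blast

end

context cring
begin

definition module_span :: "'a set \<Rightarrow> 'a set \<Rightarrow> 'a set" where
  "module_span S F = {finsum R (\<lambda>f. r f \<otimes> f) F | r. r ` F \<subseteq> S}"

lemma finite_quotient_module_iff:
  "finite_quotient_module R S A \<longleftrightarrow>
     (\<exists>F. finite F \<and> F \<subseteq> carrier R \<and> carrier R \<subseteq> A <+>\<^bsub>R\<^esub> module_span S F)"
  unfolding finite_quotient_module_def module_span_def set_add_def' by (intro ex_cong1) blast

definition mult_list :: "'a list \<Rightarrow> 'a" where
  "mult_list l = foldr (\<otimes>) l \<one>"

definition monomials :: "'a set \<Rightarrow> nat \<Rightarrow> 'a set" where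
  "monomials G M = mult_list ` {l. set l \<subseteq> G \<and> length l \<le> M}"

lemma mult_list_Nil [simp]: "mult_list [] = \<one>"
  by (simp add: mult_list_def)

lemma mult_list_Cons [simp]: "mult_list (g # l) = g \<otimes> mult_list l"
  by (simp add: mult_list_def)

lemma mult_list_carrier: "set l \<subseteq> carrier R \<Longrightarrow> mult_list l \<in> carrier R"
  by (induction l) auto

lemma monomials_finite: "finite G \<Longrightarrow> finite (monomials G M)"
  unfolding monomials_def by (intro finite_imageI finite_lists_length_le)

lemma monomials_carrier: "G \<subseteq> carrier R \<Longrightarrow> monomials G M \<subseteq> carrier R"
  unfolding monomials_def using mult_list_carrier by blast

context
  fixes S F
  assumes S: "subring S R" and F: "finite F" "F \<subseteq> carrier R"
begin

private lemma coeffs_carrier: "r ` F \<subseteq> S \<Longrightarrow> (\<lambda>f. r f \<otimes> f) \<in> F \<rightarrow> carrier R"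
  using F subringE(1)[OF S] by (auto intro!: m_closed)

lemma module_span_carrier: "module_span S F \<subseteq> carrier R"
  unfolding module_span_def using finsum_closed[OF coeffs_carrier] by auto

lemma module_span_zero: "\<zero> \<in> module_span S F"
proof -
  have "finsum R (\<lambda>f. \<zero> \<otimes> f) F = finsum R (\<lambda>_. \<zero>) F"
    using F by (intro finsum_cong') (auto simp: subsetD)
  then have "finsum R (\<lambda>f. \<zero> \<otimes> f) F = \<zero>" by simp
  then show ?thesis
    unfolding module_span_def using subringE(2)[OF S] by (intro CollectI exI[of _ "\<lambda>_. \<zero>"]) auto
qed

lemma module_span_add:
  assumes "t1 \<in> module_span S F" "t2 \<in> module_span S F"
  shows "t1 \<oplus> t2 \<in> module_span S F"
proof -
  obtain r1 r2 where r: "r1 ` F \<subseteq> S" "t1 = finsum R (\<lambda>f. r1 f \<otimes> f) F"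
    "r2 ` F \<subseteq> S" "t2 = finsum R (\<lambda>f. r2 f \<otimes> f) F"
    using assms unfolding module_span_def by blast
  have r12: "(\<lambda>f. r1 f \<oplus> r2 f) ` F \<subseteq> S" using r subringE(7)[OF S] by auto
  have rc: "r1 f \<in> carrier R" "r2 f \<in> carrier R" "f \<in> carrier R" if "f \<in> F" for f
    using that r(1,3) F subringE(1)[OF S] by blast+
  have "t1 \<oplus> t2 = finsum R (\<lambda>f. r1 f \<otimes> f \<oplus> r2 f \<otimes> f) F"
    using r finsum_addf[OF coeffs_carrier coeffs_carrier] by simp
  also have "\<dots> = finsum R (\<lambda>f. (r1 f \<oplus> r2 f) \<otimes> f) F"
    by (rule finsum_cong'[OF refl coeffs_carrier[OF r12]]) (simp add: rc l_distr)
  finally show ?thesis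
    unfolding module_span_def using r12 by (intro CollectI exI[of _ "\<lambda>f. r1 f \<oplus> r2 f"]) simp
qed

lemma module_span_smult:
  assumes s: "s \<in> S" and t: "t \<in> module_span S F"
  shows "s \<otimes> t \<in> module_span S F"
proof -
  obtain r where r: "r ` F \<subseteq> S" "t = finsum R (\<lambda>f. r f \<otimes> f) F"
    using t unfolding module_span_def by blast
  have sr: "(\<lambda>f. s \<otimes> r f) ` F \<subseteq> S" using r s subringE(6)[OF S] by auto
  have sc: "s \<in> carrier R" using s subringE(1)[OF S] by blast
  have rc: "r f \<in> carrier R" "f \<in> carrier R" if "f \<in> F" for f
    using that r(1) F subringE(1)[OF S] by blast+
  have "s \<otimes> t = finsum R (\<lambda>f. s \<otimes> (r f \<otimes> f)) F"
    using r finsum_rdistr[OF F(1) sc coeffs_carrier] by simp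
  also have "\<dots> = finsum R (\<lambda>f. (s \<otimes> r f) \<otimes> f) F"
    by (rule finsum_cong'[OF refl coeffs_carrier[OF sr]]) (simp add: rc sc m_assoc)
  finally show ?thesis
    unfolding module_span_def using sr by (intro CollectI exI[of _ "\<lambda>f. s \<otimes> r f"]) simp
qed

lemma module_span_generator:
  assumes c: "c \<in> S" and p: "p \<in> F"
  shows "c \<otimes> p \<in> module_span S F"
proof -
  let ?r = "\<lambda>f. if f = p then c else \<zero>"
  have r: "?r ` F \<subseteq> S" using c subringE(2)[OF S] by auto
  have cc: "c \<in> carrier R" using c subringE(1)[OF S] by blast
  have "finsum R (\<lambda>f. ?r f \<otimes> f) F = finsum R (\<lambda>f. if p = f then c \<otimes> f else \<zero>) F"
    using F cc by (intro finsum_cong') (auto simp: Pi_def subsetD)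
  also have "\<dots> = c \<otimes> p"
    using F cc p by (intro add.finprod_singleton) (auto simp: subsetD)
  finally show ?thesis
    unfolding module_span_def using r by (intro CollectI exI[of _ ?r]) simp
qed

lemma subring_plus_module_span_closed:
  assumes A: "subring A R" "S \<subseteq> A"
  defines "Q \<equiv> A <+>\<^bsub>R\<^esub> module_span S F"
  shows "Q \<subseteq> carrier R" and "A \<subseteq> Q" and "module_span S F \<subseteq> Q"
    and "\<And>u v. u \<in> Q \<Longrightarrow> v \<in> Q \<Longrightarrow> u \<oplus> v \<in> Q"
    and "\<And>s q. s \<in> S \<Longrightarrow> q \<in> Q \<Longrightarrow> s \<otimes> q \<in> Q"
proof -
  have Ac: "A \<subseteq> carrier R" using subringE(1)[OF A(1)] .
  have Sc: "S \<subseteq> carrier R" using subringE(1)[OF S] .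
  show "Q \<subseteq> carrier R"
  proof
    fix q assume "q \<in> Q"
    then obtain a t where "a \<in> A" "t \<in> module_span S F" "q = a \<oplus> t"
      unfolding Q_def by (rule set_add_memE)
    then show "q \<in> carrier R" using Ac module_span_carrier by blast
  qed
  show "A \<subseteq> Q"
  proof
    fix a assume "a \<in> A"
    then have "a \<oplus> \<zero> \<in> Q" unfolding Q_def by (intro set_add_memI module_span_zero)
    then show "a \<in> Q" using \<open>a \<in> A\<close> Ac by auto
  qed
  show "module_span S F \<subseteq> Q"
  proof
    fix t assume "t \<in> module_span S F"
    then have "\<zero> \<oplus> t \<in> Q" unfolding Q_def by (intro set_add_memI subringE(2)[OF A(1)])
    then show "t \<in> Q" using \<open>t \<in> module_span S F\<close> module_span_carrier by auto
  qed
  show "u \<oplus> v \<in> Q" if u: "u \<in> Q" and v: "v \<in> Q" for u v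
  proof -
    obtain a1 t1 where h1: "a1 \<in> A" "t1 \<in> module_span S F" "u = a1 \<oplus> t1"
      using u unfolding Q_def by (rule set_add_memE)
    obtain a2 t2 where h2: "a2 \<in> A" "t2 \<in> module_span S F" "v = a2 \<oplus> t2"
      using v unfolding Q_def by (rule set_add_memE)
    have c: "a1 \<in> carrier R" "a2 \<in> carrier R" "t1 \<in> carrier R" "t2 \<in> carrier R"
      using h1 h2 Ac module_span_carrier by blast+
    have "u \<oplus> v = (a1 \<oplus> a2) \<oplus> (t1 \<oplus> t2)"
      unfolding h1(3) h2(3) using c by (simp add: a_ac)
    moreover have "(a1 \<oplus> a2) \<oplus> (t1 \<oplus> t2) \<in> Q"
      unfolding Q_def using h1 h2 subringE(7)[OF A(1)] module_span_add by (intro set_add_memI) auto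
    ultimately show ?thesis by simp
  qed
  show "s \<otimes> q \<in> Q" if s: "s \<in> S" and q: "q \<in> Q" for s q
  proof -
    obtain a t where h: "a \<in> A" "t \<in> module_span S F" "q = a \<oplus> t"
      using q unfolding Q_def by (rule set_add_memE)
    have c: "s \<in> carrier R" "a \<in> carrier R" "t \<in> carrier R"
      using s h Sc Ac module_span_carrier by blast+
    have "s \<otimes> q = s \<otimes> a \<oplus> s \<otimes> t"
      unfolding h(3) using c by (simp add: r_distr)
    moreover have "s \<otimes> a \<oplus> s \<otimes> t \<in> Q"
      unfolding Q_def using h s A(2) subringE(6)[OF A(1)] module_span_smult
      by (intro set_add_memI) auto
    ultimately show ?thesis by simp
  qed
qed

end

end

locale standard_graded_ring =
  fixes R (structure) and Bg :: "nat \<Rightarrow> 'a set"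
  assumes standard_graded: "standard_graded R Bg"

sublocale standard_graded_ring \<subseteq> cring R
  using standard_graded unfolding standard_graded_def by auto

context standard_graded_ring
begin

lemma Bg_additive_subgroup: "additive_subgroup (Bg i) R"
  using standard_graded unfolding standard_graded_def by auto

lemma Bg_carrier: "a \<in> Bg i \<Longrightarrow> a \<in> carrier R"
  using additive_subgroup.a_subset[OF Bg_additive_subgroup] by blast

lemma Bg_zero: "\<zero> \<in> Bg i"
  by (simp add: additive_subgroup.zero_closed[OF Bg_additive_subgroup])

lemma Bg_add: "a \<in> Bg i \<Longrightarrow> b \<in> Bg i \<Longrightarrow> a \<oplus> b \<in> Bg i"
  by (simp add: additive_subgroup.a_closed[OF Bg_additive_subgroup])

lemma Bg_minus: "a \<in> Bg i \<Longrightarrow> \<ominus> a \<in> Bg i"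
  by (simp add: additive_subgroup.a_inv_closed[OF Bg_additive_subgroup])

lemma Bg_mult: "a \<in> Bg i \<Longrightarrow> b \<in> Bg j \<Longrightarrow> a \<otimes> b \<in> Bg (i + j)"
  using standard_graded unfolding standard_graded_def by auto

lemma Bg0_subring: "subring (Bg 0) R"
  using standard_graded unfolding standard_graded_def by (auto intro: subfieldE(1))

lemma Bg0_one: "\<one> \<in> Bg 0"
  using subringE(3)[OF Bg0_subring] .

lemma Bg_generators:
  obtains G where "finite G" "G \<subseteq> Bg 1" "carrier R = generate_ring R (Bg 0 \<union> G)"
  using standard_graded unfolding standard_graded_def by auto

subsection \<open>Homogeneous components\<close>

definition is_decomposition :: "'a \<Rightarrow> (nat \<Rightarrow> 'a) \<Rightarrow> bool" where
  "is_decomposition x c \<longleftrightarrow>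
     (\<forall>i. c i \<in> Bg i) \<and> (\<exists>N. (\<forall>i>N. c i = \<zero>) \<and> x = finsum R c {..N})"

definition hcomp :: "'a \<Rightarrow> nat \<Rightarrow> 'a" where
  "hcomp x = (THE c. is_decomposition x c)"

lemma unique_decomposition: "x \<in> carrier R \<Longrightarrow> \<exists>!c. is_decomposition x c"
  using standard_graded unfolding standard_graded_def is_decomposition_def by auto

lemma hcomp_is_decomposition: "x \<in> carrier R \<Longrightarrow> is_decomposition x (hcomp x)"
  unfolding hcomp_def using unique_decomposition by (rule theI')

lemma hcomp_eqI: "x \<in> carrier R \<Longrightarrow> is_decomposition x c \<Longrightarrow> hcomp x = c"
  unfolding hcomp_def using unique_decomposition by (rule the1_equality)

lemma hcomp_in_Bg: "x \<in> carrier R \<Longrightarrow> hcomp x i \<in> Bg i"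
  using hcomp_is_decomposition unfolding is_decomposition_def by blast

lemma hcomp_carrier: "x \<in> carrier R \<Longrightarrow> hcomp x i \<in> carrier R"
  using hcomp_in_Bg Bg_carrier by blast

lemma hcomp_expansion:
  assumes x: "x \<in> carrier R"
  obtains N where "\<And>i. i > N \<Longrightarrow> hcomp x i = \<zero>" "\<And>M. M \<ge> N \<Longrightarrow> x = finsum R (hcomp x) {..M}"
proof -
  obtain N where N: "\<forall>i>N. hcomp x i = \<zero>" "x = finsum R (hcomp x) {..N}"
    using hcomp_is_decomposition[OF x] unfolding is_decomposition_def by blast
  show ?thesis
  proof (rule that)
    show "hcomp x i = \<zero>" if "i > N" for i using N(1) that by blast
    show "x = finsum R (hcomp x) {..M}" if "M \<ge> N" for M
    proof -
      have "finsum R (hcomp x) {..M} = finsum R (hcomp x) {..N}"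
        by (rule add.finprod_mono_neutral_cong_left[symmetric])
          (use that N(1) hcomp_carrier[OF x] in \<open>auto simp: not_le\<close>)
      then show ?thesis using N(2) by simp
    qed
  qed
qed

lemma hcomp_homogeneous: "a \<in> Bg j \<Longrightarrow> hcomp a i = (if i = j then a else \<zero>)"
proof -
  assume a: "a \<in> Bg j"
  have "finsum R (\<lambda>i. if i = j then a else \<zero>) {..j} = a"
    using add.finprod_singleton_swap[of j "{..j}" "\<lambda>_. a"] a Bg_carrier by auto
  then have "is_decomposition a (\<lambda>i. if i = j then a else \<zero>)"
    unfolding is_decomposition_def using a Bg_zero by (auto intro!: exI[of _ j])
  then show ?thesis using hcomp_eqI a Bg_carrier by simp
qed

lemma hcomp_zero: "hcomp \<zero> i = \<zero>"
  using hcomp_homogeneous[OF Bg_zero[of 0]] by simp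

lemma hcomp_add:
  assumes x: "x \<in> carrier R" and y: "y \<in> carrier R"
  shows "hcomp (x \<oplus> y) i = hcomp x i \<oplus> hcomp y i"
proof -
  obtain N1 where N1: "\<And>i. i > N1 \<Longrightarrow> hcomp x i = \<zero>" "\<And>M. M \<ge> N1 \<Longrightarrow> x = finsum R (hcomp x) {..M}"
    using hcomp_expansion[OF x] by blast
  obtain N2 where N2: "\<And>i. i > N2 \<Longrightarrow> hcomp y i = \<zero>" "\<And>M. M \<ge> N2 \<Longrightarrow> y = finsum R (hcomp y) {..M}"
    using hcomp_expansion[OF y] by blast
  let ?M = "max N1 N2"
  have "x \<oplus> y = finsum R (hcomp x) {..?M} \<oplus> finsum R (hcomp y) {..?M}"
    using N1(2) N2(2) by simp
  also have "\<dots> = finsum R (\<lambda>i. hcomp x i \<oplus> hcomp y i) {..?M}"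
    by (rule finsum_addf[symmetric]) (use hcomp_carrier x y in auto)
  finally have "is_decomposition (x \<oplus> y) (\<lambda>i. hcomp x i \<oplus> hcomp y i)"
    unfolding is_decomposition_def using N1(1) N2(1) hcomp_in_Bg x y Bg_add
    by (auto intro!: exI[of _ ?M])
  then show ?thesis using hcomp_eqI x y by simp
qed

lemma hcomp_minus:
  assumes x: "x \<in> carrier R"
  shows "hcomp (\<ominus> x) i = \<ominus> hcomp x i"
proof -
  have "\<zero> = hcomp x i \<oplus> hcomp (\<ominus> x) i"
    using hcomp_add[of x "\<ominus> x" i] x by (simp add: hcomp_zero r_neg)
  then show ?thesis using hcomp_carrier x by (metis a_inv_closed add.inv_comm minus_equality)
qed

lemma hcomp_finsum:
  assumes "finite A" "f \<in> A \<rightarrow> carrier R"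
  shows "hcomp (finsum R f A) i = finsum R (\<lambda>a. hcomp (f a) i) A"
  using assms
proof (induction A rule: finite_induct)
  case empty
  then show ?case by (simp add: hcomp_zero)
next
  case (insert a A)
  then have fa: "f a \<in> carrier R" and fA: "f \<in> A \<rightarrow> carrier R" by auto
  then have "hcomp (finsum R f (insert a A)) i = hcomp (f a) i \<oplus> hcomp (finsum R f A) i"
    using insert hcomp_add finsum_closed by simp
  then show ?case using insert fa fA hcomp_carrier by (simp add: Pi_def)
qed

lemma finite_hcomp_bound:
  "finite F \<Longrightarrow> F \<subseteq> carrier R \<Longrightarrow> \<exists>N. \<forall>f\<in>F. \<forall>i>N. hcomp f i = \<zero>"
proof (induction F rule: finite_induct)
  case (insert f F)
  then obtain N where N: "\<forall>g\<in>F. \<forall>i>N. hcomp g i = \<zero>" by auto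
  have "f \<in> carrier R" using insert.prems by simp
  then obtain M where M: "\<And>i. i > M \<Longrightarrow> hcomp f i = \<zero>" by (rule hcomp_expansion) blast
  have "\<forall>g\<in>insert f F. \<forall>i>max N M. hcomp g i = \<zero>" using N M by simp
  then show ?case by blast
qed simp

lemma carrier_subset_if_Bg_subset:
  assumes Q: "Q \<subseteq> carrier R" "\<zero> \<in> Q" "\<And>u v. u \<in> Q \<Longrightarrow> v \<in> Q \<Longrightarrow> u \<oplus> v \<in> Q"
    and Bg_Q: "\<And>n. Bg n \<subseteq> Q"
  shows "carrier R \<subseteq> Q"
proof
  fix b assume b: "b \<in> carrier R"
  obtain K where "b = finsum R (hcomp b) {..K}" using hcomp_expansion[OF b] by blast
  moreover have "finsum R (hcomp b) {..K} \<in> Q"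
    using Bg_Q hcomp_in_Bg[OF b] by (intro finsum_closed_in[OF _ Q]) auto
  ultimately show "b \<in> Q" by simp
qed

text \<open>The degree-\<open>k\<close> component of a product is the sum of the products of the components of
  degrees \<open>i + j = k\<close>; hence it lies in every additively closed \<open>ZC k\<close> that receives these
  products.\<close>

lemma hcomp_mult_closed:
  assumes a: "a \<in> carrier R" and b: "b \<in> carrier R"
    and ZA: "\<And>i. hcomp a i \<in> ZA i" "\<And>i. ZA i \<subseteq> Bg i"
    and ZB: "\<And>j. hcomp b j \<in> ZB j" "\<And>j. ZB j \<subseteq> Bg j"
    and ZC: "\<And>i j u v. u \<in> ZA i \<Longrightarrow> v \<in> ZB j \<Longrightarrow> u \<otimes> v \<in> ZC (i + j)"
      "ZC k \<subseteq> carrier R" "\<zero> \<in> ZC k" "\<And>u v. u \<in> ZC k \<Longrightarrow> v \<in> ZC k \<Longrightarrow> u \<oplus> v \<in> ZC k"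
  shows "hcomp (a \<otimes> b) k \<in> ZC k"
proof -
  obtain Na where Na: "a = finsum R (hcomp a) {..Na}" using hcomp_expansion[OF a] by blast
  obtain Nb where Nb: "b = finsum R (hcomp b) {..Nb}" using hcomp_expansion[OF b] by blast
  have ca: "\<And>i. hcomp a i \<in> carrier R" "\<And>j. hcomp b j \<in> carrier R" using hcomp_carrier a b by auto
  have "hcomp (hcomp a i \<otimes> hcomp b j) k \<in> ZC k" for i j
  proof -
    have "hcomp a i \<in> Bg i" "hcomp b j \<in> Bg j" using ZA ZB by blast+
    then show ?thesis using hcomp_homogeneous[OF Bg_mult] ZC(1)[OF ZA(1) ZB(1)] ZC(3) by auto
  qed
  then have row: "finsum R (\<lambda>j. hcomp (hcomp a i \<otimes> hcomp b j) k) {..Nb} \<in> ZC k" for i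
    by (intro finsum_closed_in[OF _ ZC(2-4)]) auto
  have "hcomp (hcomp a i \<otimes> b) k \<in> ZC k" for i
  proof -
    have "hcomp a i \<otimes> b = finsum R (\<lambda>j. hcomp a i \<otimes> hcomp b j) {..Nb}"
      using Nb finsum_rdistr[of "{..Nb}" "hcomp a i" "hcomp b"] ca b by auto
    then show ?thesis
      using row hcomp_finsum[of "{..Nb}" "\<lambda>j. hcomp a i \<otimes> hcomp b j" k] ca by auto
  qed
  then have "finsum R (\<lambda>i. hcomp (hcomp a i \<otimes> b) k) {..Na} \<in> ZC k"
    by (intro finsum_closed_in[OF _ ZC(2-4)]) auto
  moreover have "a \<otimes> b = finsum R (\<lambda>i. hcomp a i \<otimes> b) {..Na}"
    using Na finsum_ldistr[of "{..Na}" b "hcomp a"] ca b by auto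
  ultimately show ?thesis
    using hcomp_finsum[of "{..Na}" "\<lambda>i. hcomp a i \<otimes> b" k] ca b by auto
qed

text \<open>Elements of order at least \<open>n\<close> with initial form in \<open>P\<close>. With \<open>P = carrier R\<close> this contains
  \<open>\<mm>\<^sup>n\<close>; with \<open>P = k[X]\<close> it contains \<open>(X)\<^sup>n\<close> when \<open>X\<close> consists of linear forms.\<close>

definition tail_slot :: "'a set \<Rightarrow> nat \<Rightarrow> nat \<Rightarrow> 'a set" where
  "tail_slot P n i = {z \<in> Bg i. (i < n \<longrightarrow> z = \<zero>) \<and> (i = n \<longrightarrow> z \<in> P)}"

definition graded_tail :: "'a set \<Rightarrow> nat \<Rightarrow> 'a set" where
  "graded_tail P n = {z \<in> carrier R. \<forall>i. hcomp z i \<in> tail_slot P n i}"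

context
  fixes P
  assumes P: "subring P R" "Bg 0 \<subseteq> P"
begin

lemma tail_slot_mult:
  assumes u: "u \<in> tail_slot P m i" and v: "v \<in> tail_slot P n j"
  shows "u \<otimes> v \<in> tail_slot P (m + n) (i + j)"
proof -
  have uv: "u \<in> Bg i" "v \<in> Bg j" using u v by (auto simp: tail_slot_def)
  show ?thesis
  proof (cases "i < m \<or> j < n")
    case True
    then have "u = \<zero> \<or> v = \<zero>" using u v by (auto simp: tail_slot_def)
    then have "u \<otimes> v = \<zero>" using uv Bg_carrier by auto
    then show ?thesis using subringE(2)[OF P(1)] Bg_zero by (auto simp: tail_slot_def)
  next
    case False
    then show ?thesis using u v Bg_mult[OF uv] subringE(6)[OF P(1)] by (auto simp: tail_slot_def)
  qed
qed

lemma tail_slot_add: "u \<in> tail_slot P n i \<Longrightarrow> v \<in> tail_slot P n i \<Longrightarrow> u \<oplus> v \<in> tail_slot P n i"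
  using subringE(7)[OF P(1)] by (auto simp: tail_slot_def Bg_add)

lemma graded_tail_0: "graded_tail P 0 = carrier R"
  using P(2) hcomp_in_Bg by (auto simp: graded_tail_def tail_slot_def)

lemma graded_tail_mult:
  assumes a: "a \<in> graded_tail P m" and b: "b \<in> graded_tail P n"
  shows "a \<otimes> b \<in> graded_tail P (m + n)"
proof -
  have ab: "a \<in> carrier R" "b \<in> carrier R" using a b by (auto simp: graded_tail_def)
  have "hcomp (a \<otimes> b) k \<in> tail_slot P (m + n) k" for k
  proof (rule hcomp_mult_closed[where ZA = "tail_slot P m" and ZB = "tail_slot P n"])
    show "hcomp a i \<in> tail_slot P m i" "hcomp b i \<in> tail_slot P n i" for i
      using a b by (auto simp: graded_tail_def)
    show "tail_slot P m i \<subseteq> Bg i" "tail_slot P n i \<subseteq> Bg i" for i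
      by (auto simp: tail_slot_def)
    show "tail_slot P (m + n) k \<subseteq> carrier R"
      using Bg_carrier by (auto simp: tail_slot_def)
    show "\<zero> \<in> tail_slot P (m + n) k"
      using Bg_zero subringE(2)[OF P(1)] by (auto simp: tail_slot_def)
  qed (use ab tail_slot_mult tail_slot_add in auto)
  then show ?thesis using ab by (simp add: graded_tail_def)
qed

lemma graded_tail_ideal: "ideal (graded_tail P n) R"
proof (rule idealI)
  show "ring R" by (rule ring_axioms)
  have zero: "\<zero> \<in> graded_tail P n"
    using hcomp_zero Bg_zero subringE(2)[OF P(1)] by (simp add: graded_tail_def tail_slot_def)
  have minus: "\<ominus> u \<in> tail_slot P n i" if "u \<in> tail_slot P n i" for u i
    using that Bg_minus subringE(5)[OF P(1)] Bg_carrier by (auto simp: tail_slot_def)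
  show "subgroup (graded_tail P n) (add_monoid R)"
  proof (rule add.subgroupI)
    show "graded_tail P n \<subseteq> carrier R" "graded_tail P n \<noteq> {}"
      using zero by (auto simp: graded_tail_def)
    show "\<ominus> a \<in> graded_tail P n" if "a \<in> graded_tail P n" for a
      using that hcomp_minus minus by (simp add: graded_tail_def)
    show "a \<oplus> b \<in> graded_tail P n" if "a \<in> graded_tail P n" "b \<in> graded_tail P n" for a b
      using that hcomp_add tail_slot_add by (simp add: graded_tail_def)
  qed
  show left: "x \<otimes> a \<in> graded_tail P n" if "a \<in> graded_tail P n" "x \<in> carrier R" for a x
    using graded_tail_mult[of x 0 a n] that graded_tail_0 by simp
  show "a \<otimes> x \<in> graded_tail P n" if "a \<in> graded_tail P n" "x \<in> carrier R" for a x
  proof -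
    have "a \<in> carrier R" using that(1) by (simp add: graded_tail_def)
    then show ?thesis using left[OF that] that(2) m_comm by simp
  qed
qed

lemma genideal_subset_graded_tail:
  assumes "X \<subseteq> Bg 1" "X \<subseteq> P"
  shows "Idl X \<subseteq> graded_tail P 1"
proof (rule genideal_minimal[OF graded_tail_ideal])
  show "X \<subseteq> graded_tail P 1"
  proof
    fix h assume "h \<in> X"
    then have "h \<in> Bg 1" "h \<in> P" using assms by auto
    then show "h \<in> graded_tail P 1"
      using hcomp_homogeneous[of h 1] Bg_carrier Bg_zero by (auto simp: graded_tail_def tail_slot_def)
  qed
qed

lemma ideal_power_subset_graded_tail:
  assumes "I \<subseteq> graded_tail P 1"
  shows "ideal_power R I n \<subseteq> graded_tail P n"
proof (induction n)
  case 0
  then show ?case by (simp add: graded_tail_0)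
next
  case (Suc n)
  show ?case
  proof
    fix z assume "z \<in> ideal_power R I (Suc n)"
    then show "z \<in> graded_tail P (Suc n)"
      unfolding ideal_power_Suc
    proof (induction rule: ideal_prod.induct)
      case (prod a b)
      then show ?case using assms Suc graded_tail_mult[of a 1 b n] by auto
    next
      case (sum s1 s2)
      then show ?case using ideal_add_closed[OF graded_tail_ideal] by blast
    qed
  qed
qed

end

subsection \<open>Forms in a set of linear forms\<close>

inductive forms :: "'a set \<Rightarrow> nat \<Rightarrow> 'a \<Rightarrow> bool" for X where
  scalar: "c \<in> Bg 0 \<Longrightarrow> forms X 0 c"
| zero: "forms X n \<zero>"
| add: "forms X n a \<Longrightarrow> forms X n b \<Longrightarrow> forms X n (a \<oplus> b)"
| mult_gen: "forms X n a \<Longrightarrow> g \<in> X \<Longrightarrow> forms X (Suc n) (g \<otimes> a)"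

context
  fixes X
  assumes X: "X \<subseteq> Bg 1"
begin

lemma forms_Bg: "forms X n a \<Longrightarrow> a \<in> Bg n"
proof (induction rule: forms.induct)
  case (mult_gen n a g)
  then show ?case using Bg_mult[of g 1 a n] X by auto
qed (auto simp: Bg_zero Bg_add)

lemma forms_carrier: "forms X n a \<Longrightarrow> a \<in> carrier R"
  using forms_Bg Bg_carrier by blast

lemma forms_minus: "forms X n a \<Longrightarrow> forms X n (\<ominus> a)"
proof (induction rule: forms.induct)
  case (add n a b)
  then have "\<ominus> (a \<oplus> b) = \<ominus> a \<oplus> \<ominus> b" using forms_carrier by (simp add: minus_add)
  then show ?case using add forms.add by simp
next
  case (mult_gen n a g)
  then have "\<ominus> (g \<otimes> a) = g \<otimes> \<ominus> a" using forms_carrier X Bg_carrier by (auto simp: r_minus)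
  then show ?case using mult_gen forms.mult_gen by simp
qed (auto simp: Bg_minus forms.intros)

lemma forms_scalar_mult:
  assumes c: "c \<in> Bg 0"
  shows "forms X n a \<Longrightarrow> forms X n (c \<otimes> a)"
proof (induction rule: forms.induct)
  case (scalar c')
  then show ?case using Bg_mult[OF c scalar] by (simp add: forms.scalar)
next
  case (zero n)
  then show ?case using c Bg_carrier by (auto simp: forms.zero)
next
  case (add n a b)
  then have "c \<otimes> (a \<oplus> b) = c \<otimes> a \<oplus> c \<otimes> b" using c Bg_carrier forms_carrier by (auto simp: r_distr)
  then show ?case using add forms.add by simp
next
  case (mult_gen n a g)
  then have "c \<otimes> (g \<otimes> a) = g \<otimes> (c \<otimes> a)" using c X Bg_carrier forms_carrier by (auto simp: m_lcomm)
  then show ?case using mult_gen forms.mult_gen by simp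
qed

lemma forms_mult: "forms X i a \<Longrightarrow> forms X j b \<Longrightarrow> forms X (i + j) (a \<otimes> b)"
proof (induction rule: forms.induct)
  case (scalar c)
  then show ?case using forms_scalar_mult by simp
next
  case (zero n)
  then show ?case using forms_carrier by (auto simp: forms.zero)
next
  case (add n a a')
  then have "(a \<oplus> a') \<otimes> b = a \<otimes> b \<oplus> a' \<otimes> b" using forms_carrier by (auto simp: l_distr)
  then show ?case using add forms.add by simp
next
  case (mult_gen n a g)
  then have "(g \<otimes> a) \<otimes> b = g \<otimes> (a \<otimes> b)" using X Bg_carrier forms_carrier by (auto simp: m_assoc)
  then show ?case using mult_gen forms.mult_gen by simp
qed

lemma hcomp_generate_ring_forms: "r \<in> generate_ring R (Bg 0 \<union> X) \<Longrightarrow> forms X n (hcomp r n)"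
proof (induction arbitrary: n rule: generate_ring.induct)
  case one
  then show ?case using hcomp_homogeneous[OF Bg0_one] by (auto simp: forms.scalar Bg0_one forms.zero)
next
  case (incl h)
  show ?case
  proof (cases "h \<in> Bg 0")
    case True
    then show ?thesis using hcomp_homogeneous[OF True] by (auto simp: forms.scalar forms.zero)
  next
    case False
    then have h: "h \<in> X" "h \<in> Bg 1" using incl X by auto
    then have "forms X 1 h" using forms.mult_gen[OF forms.scalar[OF Bg0_one] h(1)] Bg_carrier by auto
    then show ?thesis using hcomp_homogeneous[OF h(2)] by (auto simp: forms.zero)
  qed
next
  case (a_inv h)
  then show ?case using hcomp_minus forms_minus X Bg_carrier generate_ring_in_carrier[of "Bg 0 \<union> X"]
    by (metis Un_least subsetD subsetI)
next
  case (eng_add h1 h2)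
  moreover have "h1 \<in> carrier R" "h2 \<in> carrier R"
    using eng_add(1,2) generate_ring_in_carrier[of "Bg 0 \<union> X"] X Bg_carrier by blast+
  ultimately show ?case using hcomp_add forms.add by auto
next
  case (eng_mult h1 h2)
  have "h1 \<in> carrier R" "h2 \<in> carrier R"
    using eng_mult(1,2) generate_ring_in_carrier[of "Bg 0 \<union> X"] X Bg_carrier by blast+
  then have "hcomp (h1 \<otimes> h2) n \<in> {a. forms X n a}"
    by (intro hcomp_mult_closed[where ZA = "\<lambda>n. {a. forms X n a}" and ZB = "\<lambda>n. {a. forms X n a}"])
      (use eng_mult forms_Bg forms_carrier forms_mult forms.zero forms.add in auto)
  then show ?case by simp
qed

end

lemma homogeneous_forms_in_generators:
  obtains G where "finite G" "G \<subseteq> Bg 1" "\<And>y n. y \<in> Bg n \<Longrightarrow> forms G n y"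
proof -
  obtain G where G: "finite G" "G \<subseteq> Bg 1" "carrier R = generate_ring R (Bg 0 \<union> G)"
    by (rule Bg_generators)
  have "forms G n y" if "y \<in> Bg n" for y n
    using hcomp_generate_ring_forms[OF G(2), of y n] G(3) hcomp_homogeneous[OF that] that Bg_carrier
    by auto
  with G that show ?thesis by blast
qed

lemma forms_in_module_span_monomials:
  assumes G: "finite G" "G \<subseteq> Bg 1" and S: "subring S R" "Bg 0 \<subseteq> S"
    and "forms G j v" "set l \<subseteq> G" "length l + j \<le> M"
  shows "mult_list l \<otimes> v \<in> module_span S (monomials G M)"
proof -
  have Gc: "G \<subseteq> carrier R" using G(2) Bg_carrier by blast
  have lc: "mult_list l \<in> carrier R" if "set l \<subseteq> G" for l
    using that Gc mult_list_carrier by blast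
  note F = S(1) monomials_finite[OF G(1)] monomials_carrier[OF Gc]
  from assms(5-7) show ?thesis
  proof (induction arbitrary: l rule: forms.induct)
    case (scalar c)
    have "mult_list l \<in> monomials G M" using scalar(2,3) by (auto simp: monomials_def)
    then have "c \<otimes> mult_list l \<in> module_span S (monomials G M)"
      using module_span_generator[OF F] scalar(1) S(2) by blast
    then show ?case using lc[OF scalar(2)] Bg_carrier[OF scalar(1)] by (simp add: m_comm)
  next
    case (zero n)
    then show ?case using lc module_span_zero[OF F] by simp
  next
    case (add n a b)
    have "a \<in> carrier R" "b \<in> carrier R" using add.hyps forms_carrier[OF G(2)] by blast+
    then show ?case using add module_span_add[OF F] lc by (simp add: r_distr)
  next
    case (mult_gen n a g)
    have c: "mult_list l \<in> carrier R" "a \<in> carrier R" "g \<in> carrier R"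
      using mult_gen lc forms_carrier[OF G(2)] Gc by auto
    have "set (g # l) \<subseteq> G" "length (g # l) + n \<le> M" using mult_gen by auto
    then have "mult_list (g # l) \<otimes> a \<in> module_span S (monomials G M)"
      using mult_gen.IH by blast
    moreover have "mult_list (g # l) \<otimes> a = mult_list l \<otimes> (g \<otimes> a)"
      using c by (simp add: m_lcomm m_assoc[symmetric])
    ultimately show ?case by simp
  qed
qed

subsection \<open>Powers of the homogeneous maximal ideal\<close>

abbreviation mpow :: "nat \<Rightarrow> 'a set" where
  "mpow n \<equiv> ideal_power R (hom_max_ideal R Bg) n"

lemma hom_max_ideal_is_ideal: "ideal (hom_max_ideal R Bg) R"
  unfolding hom_max_ideal_def by (rule genideal_ideal) (use Bg_carrier in auto)

lemma mpow_is_ideal: "ideal (mpow n) R"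
  using ideal_power_is_ideal[OF hom_max_ideal_is_ideal] .

lemma Bg_subset_hom_max_ideal: "i \<ge> 1 \<Longrightarrow> Bg i \<subseteq> hom_max_ideal R Bg"
  unfolding hom_max_ideal_def using genideal_self[of "\<Union>i\<in>{1..}. Bg i"] Bg_carrier by auto

lemma mpow_subset_graded_tail: "mpow n \<subseteq> graded_tail (carrier R) n"
proof (rule ideal_power_subset_graded_tail[OF carrier_is_subring])
  show "hom_max_ideal R Bg \<subseteq> graded_tail (carrier R) 1"
    unfolding hom_max_ideal_def
  proof (rule genideal_minimal[OF graded_tail_ideal[OF carrier_is_subring]])
    show "(\<Union>i\<in>{1..}. Bg i) \<subseteq> graded_tail (carrier R) 1"
      using hcomp_homogeneous Bg_zero Bg_carrier by (auto simp: graded_tail_def tail_slot_def)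
  qed (use Bg_carrier in auto)
qed (use Bg_carrier in auto)

lemma Bg_subset_mpow: "Bg n \<subseteq> mpow n"
proof -
  obtain G where G: "G \<subseteq> Bg 1" "\<And>y n. y \<in> Bg n \<Longrightarrow> forms G n y"
    using homogeneous_forms_in_generators by metis
  have "forms G n v \<Longrightarrow> v \<in> mpow n" for n v
  proof (induction rule: forms.induct)
    case (scalar c)
    then show ?case using Bg_carrier by auto
  next
    case (zero n)
    then show ?case using ideal_zero_closed[OF mpow_is_ideal] by blast
  next
    case (add n a b)
    then show ?case using ideal_add_closed[OF mpow_is_ideal] by blast
  next
    case (mult_gen n a g)
    then have "g \<in> hom_max_ideal R Bg" using G(1) Bg_subset_hom_max_ideal[of 1] by auto
    then show ?case using mult_gen by (simp add: ideal_power_Suc ideal_prod.prod)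
  qed
  then show ?thesis using G by blast
qed

lemma mpow_subset_ideal:
  assumes K: "ideal K R" and high: "\<And>i. i \<ge> n \<Longrightarrow> Bg i \<subseteq> K"
  shows "mpow n \<subseteq> K"
proof
  fix z assume "z \<in> mpow n"
  then have z: "z \<in> graded_tail (carrier R) n" using mpow_subset_graded_tail by blast
  then have zc: "z \<in> carrier R" by (simp add: graded_tail_def)
  obtain N where N: "z = finsum R (hcomp z) {..N}" using hcomp_expansion[OF zc] by blast
  have "hcomp z i \<in> K" for i
  proof (cases "i < n")
    case True
    then show ?thesis using z ideal_zero_closed[OF K] by (simp add: graded_tail_def tail_slot_def)
  next
    case False
    then show ?thesis using high[of i] hcomp_in_Bg[OF zc, of i] by auto
  qed
  then have "finsum R (hcomp z) {..N} \<in> K"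
    using ideal.Icarr[OF K] ideal_zero_closed[OF K] ideal_add_closed[OF K]
    by (intro finsum_closed_in) auto
  then show "z \<in> K" using N by simp
qed

end

subsection \<open>Splitting the linear forms\<close>

locale graded_linear_split = standard_graded_ring +
  fixes X Y :: "'a set"
  assumes X_linear: "X \<subseteq> Bg 1" and Y_linear: "Y \<subseteq> Bg 1"
begin

abbreviation k_X :: "'a set" where
  "k_X \<equiv> generate_ring R (Bg 0 \<union> X)"

abbreviation k_XY :: "'a set" where
  "k_XY \<equiv> generate_ring R (Bg 0 \<union> (X \<union> Y))"

\<comment> \<open>The parentheses matter: \<open>Idl X \<cdot> J\<close> parses as \<open>Idl (X \<cdot> J)\<close>.\<close>
definition mixed_power :: "nat \<Rightarrow> 'a set" where
  "mixed_power n = (Idl X) \<cdot> mpow (n - 1) <+>\<^bsub>R\<^esub> ideal_power R (Idl Y) n"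

lemma X_carrier: "X \<subseteq> carrier R"
  using X_linear Bg_carrier by blast

lemma Y_carrier: "Y \<subseteq> carrier R"
  using Y_linear Bg_carrier by blast

lemma k_X_subring: "subring k_X R"
  by (rule generate_ring_is_subring) (use X_carrier Bg_carrier in auto)

lemma k_XY_subring: "subring k_XY R"
  by (rule generate_ring_is_subring) (use X_carrier Y_carrier Bg_carrier in auto)

lemma Idl_X_ideal: "ideal (Idl X) R"
  using genideal_ideal[OF X_carrier] .

lemma Idl_Y_power_ideal: "ideal (ideal_power R (Idl Y) n) R"
  using ideal_power_is_ideal[OF genideal_ideal[OF Y_carrier]] .

lemma Idl_X_mpow_ideal: "ideal ((Idl X) \<cdot> mpow k) R"
  using ideal_prod_is_ideal[OF Idl_X_ideal mpow_is_ideal] .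

lemma mixed_power_ideal: "ideal (mixed_power n) R"
  unfolding mixed_power_def using add_ideals[OF Idl_X_mpow_ideal Idl_Y_power_ideal] .

lemma Idl_X_mpow_subset_mixed_power: "(Idl X) \<cdot> mpow (n - 1) \<subseteq> mixed_power n"
  unfolding mixed_power_def using ideal_zero_closed[OF Idl_Y_power_ideal] Idl_X_mpow_ideal
  by (metis ideal.Icarr r_zero set_add_memI subsetI)

lemma Idl_Y_power_subset_mixed_power: "ideal_power R (Idl Y) n \<subseteq> mixed_power n"
  unfolding mixed_power_def using ideal_zero_closed[OF Idl_X_mpow_ideal] Idl_Y_power_ideal
  by (metis ideal.Icarr l_zero set_add_memI subsetI)

lemma mixed_power_subset_mpow:
  assumes "n \<ge> 1"
  shows "mixed_power n \<subseteq> mpow n"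
proof -
  have IX: "Idl X \<subseteq> hom_max_ideal R Bg" and IY: "Idl Y \<subseteq> hom_max_ideal R Bg"
    using genideal_minimal[OF hom_max_ideal_is_ideal] X_linear Y_linear Bg_subset_hom_max_ideal[of 1]
    by auto
  have "mpow n = hom_max_ideal R Bg \<cdot> mpow (n - 1)"
    using ideal_power_Suc[of _ "n - 1"] assms by simp
  then have "(Idl X) \<cdot> mpow (n - 1) \<subseteq> mpow n"
    using ideal_prod_mono[OF IX subset_refl] by simp
  moreover have "ideal_power R (Idl Y) n \<subseteq> mpow n"
    using ideal_power_mono[OF IY] .
  ultimately show ?thesis
    unfolding mixed_power_def using ideal_add_closed[OF mpow_is_ideal] by (blast elim: set_add_memE)
qed

lemma mixed_power_antimono:
  assumes "n \<le> i"
  shows "mixed_power i \<subseteq> mixed_power n"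
proof -
  have "(Idl X) \<cdot> mpow (i - 1) \<subseteq> (Idl X) \<cdot> mpow (n - 1)"
    using ideal_prod_mono[OF subset_refl ideal_power_antimono[OF hom_max_ideal_is_ideal]] assms by simp
  moreover have "ideal_power R (Idl Y) i \<subseteq> ideal_power R (Idl Y) n"
    using ideal_power_antimono[OF genideal_ideal[OF Y_carrier] assms] .
  ultimately show ?thesis
    unfolding mixed_power_def by (blast elim: set_add_memE intro: set_add_memI)
qed

lemma mult_Idl_X_mpow:
  assumes g: "g \<in> hom_max_ideal R Bg"
  shows "u \<in> (Idl X) \<cdot> mpow k \<Longrightarrow> g \<otimes> u \<in> (Idl X) \<cdot> mpow (Suc k)"
proof (induction rule: ideal_prod.induct)
  case (prod a b)
  have c: "g \<in> carrier R" "a \<in> carrier R" "b \<in> carrier R"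
    using g prod ideal.Icarr[OF hom_max_ideal_is_ideal] ideal.Icarr[OF Idl_X_ideal]
      ideal.Icarr[OF mpow_is_ideal] by blast+
  have "g \<otimes> b \<in> mpow (Suc k)" using g prod by (simp add: ideal_power_Suc ideal_prod.prod)
  then have "a \<otimes> (g \<otimes> b) \<in> (Idl X) \<cdot> mpow (Suc k)" using prod by (simp add: ideal_prod.prod)
  then show ?case using c by (simp add: m_lcomm)
next
  case (sum s1 s2)
  have "g \<in> carrier R" "s1 \<in> carrier R" "s2 \<in> carrier R"
    using g sum ideal.Icarr[OF hom_max_ideal_is_ideal] ideal.Icarr[OF Idl_X_mpow_ideal] by blast+
  then show ?case using sum ideal_add_closed[OF Idl_X_mpow_ideal] by (simp add: r_distr)
qed

lemma Y_mult_mixed_power: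
  assumes g: "g \<in> Y" and v: "v \<in> mixed_power n"
  shows "g \<otimes> v \<in> mixed_power (Suc n)"
proof -
  obtain u w where u: "u \<in> (Idl X) \<cdot> mpow (n - 1)" and w: "w \<in> ideal_power R (Idl Y) n"
    and v_eq: "v = u \<oplus> w"
    using v unfolding mixed_power_def by (rule set_add_memE)
  have c: "g \<in> carrier R" "u \<in> carrier R" "w \<in> carrier R"
    using g u w Y_carrier ideal.Icarr[OF Idl_X_mpow_ideal] ideal.Icarr[OF Idl_Y_power_ideal] by blast+
  have "g \<otimes> w \<in> ideal_power R (Idl Y) (Suc n)"
    using g w genideal_self[OF Y_carrier] by (auto simp: ideal_power_Suc intro: ideal_prod.prod)
  moreover have "g \<otimes> u \<in> (Idl X) \<cdot> mpow (Suc n - 1)"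
  proof (cases n)
    case 0
    then show ?thesis using u c ideal.I_l_closed[OF Idl_X_mpow_ideal[of 0], of u g] by simp
  next
    case (Suc k)
    have "g \<in> hom_max_ideal R Bg" using g Y_linear Bg_subset_hom_max_ideal[of 1] by auto
    then show ?thesis using mult_Idl_X_mpow u Suc by simp
  qed
  ultimately show ?thesis
    unfolding mixed_power_def v_eq using c by (simp add: r_distr set_add_memI)
qed

lemma forms_in_mixed_power: "forms (X \<union> Y) i v \<Longrightarrow> v \<in> mixed_power i"
proof (induction rule: forms.induct)
  case (scalar c)
  then show ?case using Idl_Y_power_subset_mixed_power[of 0] Bg_carrier by auto
next
  case (zero n)
  then show ?case using ideal_zero_closed[OF mixed_power_ideal] by blast
next
  case (add n a b)
  then show ?case using ideal_add_closed[OF mixed_power_ideal] by blast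
next
  case (mult_gen n a g)
  show ?case
  proof (cases "g \<in> X")
    case True
    have "a \<in> mpow n" using forms_Bg[OF _ mult_gen(1)] X_linear Y_linear Bg_subset_mpow by auto
    then have "g \<otimes> a \<in> (Idl X) \<cdot> mpow (Suc n - 1)"
      using True genideal_self[OF X_carrier] by (auto intro: ideal_prod.prod)
    then show ?thesis using Idl_X_mpow_subset_mixed_power by blast
  next
    case False
    then show ?thesis using mult_gen Y_mult_mixed_power by auto
  qed
qed

lemma forms_X_mult_homogeneous:
  assumes "forms X j u" "0 < j" "v \<in> Bg l"
  shows "u \<otimes> v \<in> (Idl X) \<cdot> mpow (j + l - 1)"
  using assms
proof (induction rule: forms.induct)
  case (zero n)
  then show ?case using ideal_zero_closed[OF Idl_X_mpow_ideal] Bg_carrier by auto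
next
  case (add n a b)
  then have "(a \<oplus> b) \<otimes> v = a \<otimes> v \<oplus> b \<otimes> v"
    using forms_carrier[OF X_linear] Bg_carrier by (auto simp: l_distr)
  then show ?case using add ideal_add_closed[OF Idl_X_mpow_ideal] by auto
next
  case (mult_gen n a g)
  have c: "g \<in> carrier R" "a \<in> carrier R" "v \<in> carrier R"
    using mult_gen X_carrier forms_carrier[OF X_linear] Bg_carrier by auto
  have "a \<otimes> v \<in> mpow (n + l)"
    using Bg_mult[OF forms_Bg[OF X_linear mult_gen(1)] mult_gen(5)] Bg_subset_mpow by blast
  moreover have "g \<in> Idl X" using mult_gen genideal_self[OF X_carrier] by blast
  ultimately have "g \<otimes> (a \<otimes> v) \<in> (Idl X) \<cdot> mpow (n + l)" by (simp add: ideal_prod.prod)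
  then show ?case using c by (simp add: m_assoc)
qed simp

lemma hcomp_k_X_mult_in_mixed_power:
  assumes r: "r \<in> k_X" and f: "f \<in> carrier R" and f_bound: "\<And>l. l > N \<Longrightarrow> hcomp f l = \<zero>"
    and n: "N < n" "n \<le> i"
  shows "hcomp (r \<otimes> f) i \<in> mixed_power n"
proof -
  let ?ZB = "\<lambda>l. if l \<le> N then Bg l else {\<zero>}"
  let ?ZC = "\<lambda>k. if n \<le> k then mixed_power n else carrier R"
  have rc: "r \<in> carrier R" using r subringE(1)[OF k_X_subring] by blast
  have "hcomp (r \<otimes> f) i \<in> ?ZC i"
  proof (rule hcomp_mult_closed[where ZA = "\<lambda>j. {u. forms X j u}" and ZB = ?ZB and ZC = ?ZC])
    show "hcomp r j \<in> {u. forms X j u}" for j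
      using hcomp_generate_ring_forms[OF X_linear r] by simp
    show "{u. forms X j u} \<subseteq> Bg j" for j
      using forms_Bg[OF X_linear] by blast
    show "hcomp f l \<in> ?ZB l" for l
      using f_bound[of l] hcomp_in_Bg[OF f, of l] by simp
    show "?ZB l \<subseteq> Bg l" for l
      using Bg_zero by simp
    show "?ZC i \<subseteq> carrier R" "\<zero> \<in> ?ZC i"
      using ideal.Icarr[OF mixed_power_ideal] ideal_zero_closed[OF mixed_power_ideal] by auto
    show "u \<oplus> v \<in> ?ZC i" if "u \<in> ?ZC i" "v \<in> ?ZC i" for u v
      using that ideal_add_closed[OF mixed_power_ideal] by (cases "n \<le> i") simp_all
    show "u \<otimes> v \<in> ?ZC (j + l)" if u: "u \<in> {u. forms X j u}" and v: "v \<in> ?ZB l" for j l u v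
    proof -
      have uv: "u \<in> carrier R" "v \<in> carrier R"
        using u v forms_carrier[OF X_linear] Bg_carrier Bg_zero by (auto split: if_splits)
      have "u \<otimes> v \<in> mixed_power n" if high: "n \<le> j + l"
      proof (cases "l \<le> N")
        case False
        then show ?thesis using v uv ideal_zero_closed[OF mixed_power_ideal] by simp
      next
        case True
        then have "u \<otimes> v \<in> (Idl X) \<cdot> mpow (j + l - 1)"
          using forms_X_mult_homogeneous u v n high by simp
        moreover have "(Idl X) \<cdot> mpow (j + l - 1) \<subseteq> (Idl X) \<cdot> mpow (n - 1)"
          using ideal_prod_mono[OF subset_refl ideal_power_antimono[OF hom_max_ideal_is_ideal]] high
          by simp
        ultimately show ?thesis using Idl_X_mpow_subset_mixed_power by blast
      qed
      then show ?thesis using uv by simp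
    qed
  qed (use rc f in simp_all)
  then show ?thesis using n by simp
qed

lemma hcomp_Idl_X_mpow_closed:
  assumes Q: "Q \<subseteq> carrier R" "\<zero> \<in> Q" "\<And>u v. u \<in> Q \<Longrightarrow> v \<in> Q \<Longrightarrow> u \<oplus> v \<in> Q"
      "\<And>s q. s \<in> k_X \<Longrightarrow> q \<in> Q \<Longrightarrow> s \<otimes> q \<in> Q"
    and Bk: "Bg k \<subseteq> Q"
  shows "u \<in> (Idl X) \<cdot> mpow k \<Longrightarrow> hcomp u (Suc k) \<in> Q"
proof (induction rule: ideal_prod.induct)
  case (prod a b)
  let ?ZC = "\<lambda>m. if m = Suc k then Q else carrier R"
  have "Idl X \<subseteq> graded_tail k_X 1"
    using genideal_subset_graded_tail[OF k_X_subring _ X_linear] by (auto intro: generate_ring.incl)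
  then have a: "a \<in> graded_tail k_X 1" using prod by blast
  have b: "b \<in> graded_tail (carrier R) k"
    using prod mpow_subset_graded_tail by blast
  have "hcomp (a \<otimes> b) (Suc k) \<in> ?ZC (Suc k)"
  proof (rule hcomp_mult_closed[where ZA = "tail_slot k_X 1" and ZB = "tail_slot (carrier R) k" and ZC = ?ZC])
    show "hcomp a i \<in> tail_slot k_X 1 i" "hcomp b i \<in> tail_slot (carrier R) k i" for i
      using a b by (auto simp: graded_tail_def)
    show "tail_slot k_X 1 i \<subseteq> Bg i" "tail_slot (carrier R) k i \<subseteq> Bg i" for i
      by (auto simp: tail_slot_def)
    show "u \<otimes> v \<in> ?ZC (i + j)" if u: "u \<in> tail_slot k_X 1 i" and v: "v \<in> tail_slot (carrier R) k j"
      for i j u v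
    proof (cases "i + j = Suc k")
      case True
      show ?thesis
      proof (cases "i = 1")
        case True
        then have "u \<in> k_X" "v \<in> Q" using u v \<open>i + j = Suc k\<close> Bk by (auto simp: tail_slot_def)
        then show ?thesis using Q(4) \<open>i + j = Suc k\<close> by simp
      next
        case False
        then have "u = \<zero> \<or> v = \<zero>" using u v True by (auto simp: tail_slot_def)
        then show ?thesis using u v Q(2) Bg_carrier by (auto simp: tail_slot_def)
      qed
    next
      case False
      then show ?thesis using u v Bg_carrier by (auto simp: tail_slot_def)
    qed
    show "a \<in> carrier R" "b \<in> carrier R" using a b by (auto simp: graded_tail_def)
  qed (use Q in simp_all)
  then show ?case by simp
next
  case (sum s1 s2)
  then have "s1 \<in> carrier R" "s2 \<in> carrier R" using ideal.Icarr[OF Idl_X_mpow_ideal] by blast+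
  then show ?case using sum hcomp_add Q(3) by simp
qed

lemma hcomp_Idl_Y_power: "w \<in> ideal_power R (Idl Y) n \<Longrightarrow> hcomp w n \<in> k_XY"
proof -
  assume w: "w \<in> ideal_power R (Idl Y) n"
  have "Idl Y \<subseteq> graded_tail k_XY 1"
    using genideal_subset_graded_tail[OF k_XY_subring _ Y_linear] by (auto intro: generate_ring.incl)
  then have "w \<in> graded_tail k_XY n"
    using ideal_power_subset_graded_tail[OF k_XY_subring] w by (auto intro: generate_ring.incl)
  then show ?thesis by (simp add: graded_tail_def tail_slot_def)
qed

lemma mixed_power_homogeneous_closed:
  assumes Q: "Q \<subseteq> carrier R" "\<zero> \<in> Q" "\<And>u v. u \<in> Q \<Longrightarrow> v \<in> Q \<Longrightarrow> u \<oplus> v \<in> Q"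
      "\<And>s q. s \<in> k_X \<Longrightarrow> q \<in> Q \<Longrightarrow> s \<otimes> q \<in> Q" "k_XY \<subseteq> Q"
    and Bg_Q: "Bg (n - 1) \<subseteq> Q" and n: "n \<ge> 1"
    and y: "y \<in> Bg n" "y \<in> mixed_power n"
  shows "y \<in> Q"
proof -
  obtain u w where u: "u \<in> (Idl X) \<cdot> mpow (n - 1)" and w: "w \<in> ideal_power R (Idl Y) n"
    and y_eq: "y = u \<oplus> w"
    using y(2) unfolding mixed_power_def by (rule set_add_memE)
  have uw: "u \<in> carrier R" "w \<in> carrier R"
    using u w ideal.Icarr[OF Idl_X_mpow_ideal] ideal.Icarr[OF Idl_Y_power_ideal] by blast+
  have "y = hcomp u n \<oplus> hcomp w n"
    using hcomp_homogeneous[OF y(1), of n] hcomp_add[OF uw] unfolding y_eq by simp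
  moreover have "hcomp u (Suc (n - 1)) \<in> Q"
    using hcomp_Idl_X_mpow_closed[OF Q(1-4) Bg_Q u] .
  moreover have "hcomp w n \<in> Q" using hcomp_Idl_Y_power[OF w] Q(5) by blast
  ultimately show ?thesis using Q(3) n by simp
qed

lemma Bg_subset_mixed_power:
  assumes F: "finite F" "F \<subseteq> carrier R"
    and cover: "carrier R \<subseteq> k_XY <+>\<^bsub>R\<^esub> module_span k_X F"
    and N: "\<forall>f\<in>F. \<forall>l>N. hcomp f l = \<zero>" and n: "N < n" "n \<le> i"
  shows "Bg i \<subseteq> mixed_power n"
proof
  fix y assume y: "y \<in> Bg i"
  then have "y \<in> k_XY <+>\<^bsub>R\<^esub> module_span k_X F" using cover Bg_carrier by blast
  then obtain a t where a: "a \<in> k_XY" and t: "t \<in> module_span k_X F" and y_eq: "y = a \<oplus> t"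
    by (rule set_add_memE)
  obtain r where r: "r ` F \<subseteq> k_X" and t_eq: "t = finsum R (\<lambda>f. r f \<otimes> f) F"
    using t unfolding module_span_def by blast
  have "r f \<in> carrier R" "f \<in> carrier R" if "f \<in> F" for f
    using that r F subringE(1)[OF k_X_subring] by auto
  then have rc: "(\<lambda>f. r f \<otimes> f) \<in> F \<rightarrow> carrier R" by (simp add: Pi_def)
  have ac: "a \<in> carrier R" using a subringE(1)[OF k_XY_subring] by blast
  have "y = hcomp a i \<oplus> finsum R (\<lambda>f. hcomp (r f \<otimes> f) i) F"
    using hcomp_homogeneous[OF y, of i] hcomp_add[OF ac finsum_closed[OF rc]] hcomp_finsum[OF F(1) rc]
    unfolding y_eq t_eq by simp
  moreover have "hcomp a i \<in> mixed_power n"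
  proof -
    have "forms (X \<union> Y) i (hcomp a i)"
      using hcomp_generate_ring_forms[of "X \<union> Y" a i] a X_linear Y_linear by simp
    then show ?thesis using forms_in_mixed_power mixed_power_antimono[OF n(2)] by blast
  qed
  moreover have "hcomp (r f \<otimes> f) i \<in> mixed_power n" if "f \<in> F" for f
    using hcomp_k_X_mult_in_mixed_power[of "r f" f N n i] r F N n that by auto
  then have "finsum R (\<lambda>f. hcomp (r f \<otimes> f) i) F \<in> mixed_power n"
    using F(1) ideal.Icarr[OF mixed_power_ideal]
      ideal_zero_closed[OF mixed_power_ideal] ideal_add_closed[OF mixed_power_ideal]
    by (intro finsum_closed_in) auto
  ultimately show "y \<in> mixed_power n"
    using ideal_add_closed[OF mixed_power_ideal] by simp
qed

lemma eventually_mpow_eq_mixed_power: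
  assumes "finite_quotient_module R k_X k_XY"
  shows "\<exists>N. \<forall>n\<ge>N. mpow n = mixed_power n"
proof -
  obtain F where F: "finite F" "F \<subseteq> carrier R"
    and cover: "carrier R \<subseteq> k_XY <+>\<^bsub>R\<^esub> module_span k_X F"
    using assms unfolding finite_quotient_module_iff by blast
  obtain N where N: "\<forall>f\<in>F. \<forall>l>N. hcomp f l = \<zero>"
    using finite_hcomp_bound[OF F] by blast
  have "mpow n = mixed_power n" if "N < n" for n
  proof
    show "mpow n \<subseteq> mixed_power n"
      using Bg_subset_mixed_power[OF F cover N] that
      by (intro mpow_subset_ideal[OF mixed_power_ideal]) auto
    show "mixed_power n \<subseteq> mpow n"
      using mixed_power_subset_mpow that by simp
  qed
  then show ?thesis by (intro exI[of _ "Suc N"]) auto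
qed

lemma finite_quotient_module_if_eventually:
  assumes "\<exists>N. \<forall>n\<ge>N. mpow n = mixed_power n"
  shows "finite_quotient_module R k_X k_XY"
proof -
  obtain N where N: "\<And>n. n \<ge> N \<Longrightarrow> mpow n = mixed_power n" using assms by blast
  obtain G where G: "finite G" "G \<subseteq> Bg 1" "\<And>y n. y \<in> Bg n \<Longrightarrow> forms G n y"
    using homogeneous_forms_in_generators by metis
  have Gc: "G \<subseteq> carrier R" using G(2) Bg_carrier by blast
  define F where "F = monomials G N"
  define Q where "Q = k_XY <+>\<^bsub>R\<^esub> module_span k_X F"
  have k_X_k_XY: "k_X \<subseteq> k_XY"
    by (rule generate_ring_min_subring1[OF _ k_XY_subring])
      (use X_carrier Bg_carrier in \<open>auto intro: generate_ring.incl\<close>)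
  have F: "finite F" "F \<subseteq> carrier R"
    unfolding F_def using monomials_finite[OF G(1)] monomials_carrier[OF Gc] by blast+
  note Q_closed = subring_plus_module_span_closed[OF k_X_subring F k_XY_subring k_X_k_XY, folded Q_def]
  have zero_Q: "\<zero> \<in> Q" using Q_closed(2) subringE(2)[OF k_XY_subring] by blast
  have Bg_Q: "Bg n \<subseteq> Q" for n
  proof (induction n rule: less_induct)
    case (less n)
    show ?case
    proof
      fix y assume y: "y \<in> Bg n"
      show "y \<in> Q"
      proof (cases "n \<le> N")
        case True
        have "Bg 0 \<subseteq> k_X" by (auto intro: generate_ring.incl)
        then have "mult_list [] \<otimes> y \<in> module_span k_X F"
          unfolding F_def using True
          by (intro forms_in_module_span_monomials[OF G(1,2) k_X_subring _ G(3)[OF y]]) simp_all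
        then show ?thesis using Q_closed(3) Bg_carrier[OF y] by auto
      next
        case False
        then have "y \<in> mixed_power n" using y Bg_subset_mpow[of n] N[of n] by auto
        moreover have "Bg (n - 1) \<subseteq> Q" using less False by simp
        ultimately show ?thesis
          using mixed_power_homogeneous_closed[OF Q_closed(1) zero_Q Q_closed(4,5,2)] False y
          by simp
      qed
    qed
  qed
  have "carrier R \<subseteq> Q"
    using carrier_subset_if_Bg_subset[OF Q_closed(1) zero_Q Q_closed(4) Bg_Q] .
  then show ?thesis
    unfolding finite_quotient_module_iff Q_def using F by blast
qed

lemma eventually_mpow_eq_mixed_power_iff:
  "(\<exists>N. \<forall>n\<ge>N. mpow n = mixed_power n) \<longleftrightarrow> finite_quotient_module R k_X k_XY"
  using eventually_mpow_eq_mixed_power finite_quotient_module_if_eventually by blast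

end

theorem lemma2p4:
  fixes R :: "('a, 'b) ring_scheme" and Bg :: "nat \<Rightarrow> 'a set"
    and d s :: nat and x :: "nat \<Rightarrow> 'a"
  assumes "standard_graded R Bg"
    and "krull_dim_eq R d"
    and "d \<ge> 1"
    and "\<forall>i\<in>{1..d+s}. x i \<in> Bg 1"
  shows "(\<exists>N. \<forall>n\<ge>N.
            ideal_power R (hom_max_ideal R Bg) n =
              ideal_prod R (Idl\<^bsub>R\<^esub> (x ` {1..d-1})) (ideal_power R (hom_max_ideal R Bg) (n - 1))
              <+>\<^bsub>R\<^esub> ideal_power R (Idl\<^bsub>R\<^esub> (x ` {d..d+s})) n)
         \<longleftrightarrow> finite_quotient_module R
               (generate_ring R (Bg 0 \<union> x ` {1..d-1}))
               (generate_ring R (Bg 0 \<union> x ` {1..d+s}))"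
proof -
  interpret graded_linear_split R Bg "x ` {1..d-1}" "x ` {d..d+s}"
    by unfold_locales (use assms in auto)
  have "{1..d+s} = {1..d-1} \<union> {d..d+s}" using assms(3) by auto
  then have "x ` {1..d+s} = x ` {1..d-1} \<union> x ` {d..d+s}" by (simp add: image_Un)
  then show ?thesis using eventually_mpow_eq_mixed_power_iff unfolding mixed_power_def by simp
qed

end
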